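(* Let $\ell\ge 3$ and $d\ge 1$ be integers. For every integer $t$ with $1\le t\le \ell-2$, the number of vertices of the $t$-iterated line digraph $L^t(CK(d,\ell))$ is $$(d^2-d+1)^t d^{\ell-t}+\frac{1}{2}(-1)^{\ell+1}(d-2)^t(d-1)d+\frac{1}{2}(-1)^{\ell} d^{t+1}(d+1).$$
   Context: Let $\Sigma=\{0,1,\dots,d\}$. The cyclic Kautz digraph $CK(d,\ell)$ has as vertices all sequences $a_1\ldots a_\ell\in\Sigma^\ell$ with $a_i\neq a_{i+1}$ for $1\le i\le \ell-1$ and $a_1\neq a_\ell$, with an arc from $a_1\ldots a_\ell$ to $b_1\ldots b_\ell$ iff both are vertices and $b_i=a_{i+1}$ for $1\le i\le\ell-1$. The line digraph $L(G)$ of a digraph $G$ has as vertices the arcs of $G$, with an arc from $(u,v)$ to $(v',w)$ iff $v'=v$. $L^0(G)=G$ and $L^t(G)=L(L^{t-1}(G))$. *)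

theory Defs
  imports Main "HOL.Real"
begin

text \<open>Vertices of iterated line digraphs: a base vertex, or an arc (u,v) of
  the previous digraph, viewed as a vertex.\<close>
datatype 'a vtx = Base 'a | Arc "'a vtx" "'a vtx"

type_synonym 'a digraph = "'a set \<times> ('a \<times> 'a) set"

definition verts :: "'a digraph \<Rightarrow> 'a set" where
  "verts G = fst G"

definition arcs :: "'a digraph \<Rightarrow> ('a \<times> 'a) set" where
  "arcs G = snd G"

definition line_digraph :: "'a vtx digraph \<Rightarrow> 'a vtx digraph" where
  "line_digraph G =
     ({Arc u v | u v. (u, v) \<in> arcs G},
      {(Arc u v, Arc v' w) | u v v' w. (u, v) \<in> arcs G \<and> (v', w) \<in> arcs G \<and> v' = v})"

definition iter_line_digraph :: "nat \<Rightarrow> 'a vtx digraph \<Rightarrow> 'a vtx digraph" where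
  "iter_line_digraph t G = (line_digraph ^^ t) G"

definition CK_vertex :: "nat \<Rightarrow> nat \<Rightarrow> nat list \<Rightarrow> bool" where
  "CK_vertex d l a \<longleftrightarrow> length a = l \<and> (\<forall>i<l. a ! i \<le> d)
     \<and> (\<forall>i. i + 1 < l \<longrightarrow> a ! i \<noteq> a ! (i + 1))
     \<and> a ! 0 \<noteq> a ! (l - 1)"

definition CK :: "nat \<Rightarrow> nat \<Rightarrow> nat list vtx digraph" where
  "CK d l =
     ({Base a | a. CK_vertex d l a},
      {(Base a, Base b) | a b. CK_vertex d l a \<and> CK_vertex d l b
          \<and> (\<forall>i. i + 1 < l \<longrightarrow> b ! i = a ! (i + 1))})"

end

theory Submission
  imports Defs
begin

text \<open>
  A vertex of L^t(CK(d,l)) is determined by the word of length l + t that it spells, and these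
  are exactly the words w over {0..d} with w(i) \<noteq> w(i+1) and w(j) \<noteq> w(j+l-1): the line digraph
  of the overlap digraph of a set of words is the overlap digraph of the words one letter longer.
  For t \<le> l - 2 the constraints w(j) \<noteq> w(j+l-1) only tie the first t + 1 letters to the last
  t + 1 letters, so such a word is a ladder (these two blocks) joined by a walk of length
  l - t - 1 in the complete digraph on {0..d}. Walks are counted through the eigenvalues d and -1
  of that digraph; the ladders, split according to whether the joining walk is closed, obey a
  linear recurrence in t whose solution gives the formula.
\<close>

lemma card_filter_bij_Sigma:
  assumes bij: "bij_betw f (Sigma A B) C" and "finite A" "\<And>a. a \<in> A \<Longrightarrow> finite (B a)"
  shows "card {c \<in> C. P c} = (\<Sum>a\<in>A. card {b \<in> B a. P (f (a, b))})"
proof -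
  have "bij_betw f (SIGMA a:A. {b \<in> B a. P (f (a, b))}) {c \<in> C. P c}"
    by (rule bij_betw_subset[OF bij]) (use bij in \<open>auto simp: bij_betw_def\<close>)
  then show ?thesis
    using assms(2,3) by (simp add: bij_betw_same_card[symmetric])
qed

fun vtx_word :: "'a list vtx \<Rightarrow> 'a list" where
  "vtx_word (Base a) = a"
| "vtx_word (Arc u v) = vtx_word u @ [last (vtx_word v)]"

definition overlap_digraph :: "'a list vtx digraph \<Rightarrow> 'a list set \<Rightarrow> bool" where
  "overlap_digraph H W \<longleftrightarrow> bij_betw vtx_word (verts H) W \<and>
     (\<forall>X Y. (X, Y) \<in> arcs H \<longleftrightarrow> X \<in> verts H \<and> Y \<in> verts H \<and> tl (vtx_word X) = butlast (vtx_word Y))"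

lemma verts_line_digraph: "verts (line_digraph H) = {Arc u v | u v. (u, v) \<in> arcs H}"
  by (simp add: line_digraph_def verts_def)

lemma arcs_line_digraph:
  "arcs (line_digraph H) = {(Arc u v, Arc v w) | u v w. (u, v) \<in> arcs H \<and> (v, w) \<in> arcs H}"
  by (auto simp: line_digraph_def arcs_def)

lemma overlap_digraph_arc_iff:
  "overlap_digraph H W \<Longrightarrow>
     (X, Y) \<in> arcs H \<longleftrightarrow> X \<in> verts H \<and> Y \<in> verts H \<and> tl (vtx_word X) = butlast (vtx_word Y)"
  by (simp add: overlap_digraph_def)

lemma tl_vtx_word_Arc:
  assumes H: "overlap_digraph H W" and "[] \<notin> W" and "(x, y) \<in> arcs H"
  shows "tl (vtx_word (Arc x y)) = vtx_word y"
proof -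
  have "x \<in> verts H" "y \<in> verts H" and overlap: "tl (vtx_word x) = butlast (vtx_word y)"
    using assms overlap_digraph_arc_iff[OF H] by auto
  moreover have "vtx_word ` verts H = W" using H by (simp add: overlap_digraph_def bij_betw_def)
  ultimately have "vtx_word x \<noteq> []" "vtx_word y \<noteq> []"
    using \<open>[] \<notin> W\<close> by (metis imageI)+
  then show ?thesis using overlap by simp
qed

lemma bij_betw_vtx_word_line_digraph:
  assumes H: "overlap_digraph H W" and nonempty: "[] \<notin> W"
  shows "bij_betw vtx_word (verts (line_digraph H)) {w. w \<noteq> [] \<and> butlast w \<in> W \<and> tl w \<in> W}"
proof -
  have bij: "bij_betw vtx_word (verts H) W" using H by (simp add: overlap_digraph_def)
  note arc = overlap_digraph_arc_iff[OF H] and tl_word = tl_vtx_word_Arc[OF H nonempty]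
  have "inj_on vtx_word (verts (line_digraph H))"
  proof (rule inj_onI)
    fix X Y assume "X \<in> verts (line_digraph H)" "Y \<in> verts (line_digraph H)" "vtx_word X = vtx_word Y"
    then obtain x y x' y' where X: "X = Arc x y" "(x, y) \<in> arcs H" and Y: "Y = Arc x' y'" "(x', y') \<in> arcs H"
      and eq: "vtx_word (Arc x y) = vtx_word (Arc x' y')"
      by (auto simp: verts_line_digraph)
    have "vtx_word x = vtx_word x'" "vtx_word y = vtx_word y'"
      using eq tl_word[OF X(2)] tl_word[OF Y(2)] by (metis vtx_word.simps(2) butlast_snoc)+
    then have "x = x'" "y = y'" using X Y arc bij by (metis bij_betw_imp_inj_on inj_on_eq_iff)+
    then show "X = Y" using X Y by simp
  qed
  moreover have "vtx_word ` verts (line_digraph H) = {w. w \<noteq> [] \<and> butlast w \<in> W \<and> tl w \<in> W}"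
  proof (intro set_eqI iffI)
    fix w assume "w \<in> vtx_word ` verts (line_digraph H)"
    then obtain x y where "(x, y) \<in> arcs H" "w = vtx_word (Arc x y)"
      by (auto simp: verts_line_digraph)
    then show "w \<in> {w. w \<noteq> [] \<and> butlast w \<in> W \<and> tl w \<in> W}"
      using arc bij tl_word by (auto simp: bij_betw_def)
  next
    fix w assume w: "w \<in> {w. w \<noteq> [] \<and> butlast w \<in> W \<and> tl w \<in> W}"
    then obtain x y where x: "x \<in> verts H" "vtx_word x = butlast w" and y: "y \<in> verts H" "vtx_word y = tl w"
      using bij by (metis (no_types, lifting) bij_betw_def imageE mem_Collect_eq)
    have "(x, y) \<in> arcs H" using x y arc by (simp add: butlast_tl)
    then have "Arc x y \<in> verts (line_digraph H)" by (auto simp: verts_line_digraph)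
    moreover have "tl w \<noteq> []" using w nonempty by auto
    then have "w = vtx_word (Arc x y)" using w x y by (simp add: last_tl)
    ultimately show "w \<in> vtx_word ` verts (line_digraph H)" by blast
  qed
  ultimately show ?thesis by (simp add: bij_betw_def)
qed

lemma overlap_digraph_line_digraph:
  assumes H: "overlap_digraph H W" and nonempty: "[] \<notin> W"
  shows "overlap_digraph (line_digraph H) {w. w \<noteq> [] \<and> butlast w \<in> W \<and> tl w \<in> W}"
proof -
  note arc = overlap_digraph_arc_iff[OF H] and tl_word = tl_vtx_word_Arc[OF H nonempty]
  have "(X, Y) \<in> arcs (line_digraph H) \<longleftrightarrow> X \<in> verts (line_digraph H) \<and> Y \<in> verts (line_digraph H)
      \<and> tl (vtx_word X) = butlast (vtx_word Y)" for X Y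
  proof
    assume "(X, Y) \<in> arcs (line_digraph H)"
    then show "X \<in> verts (line_digraph H) \<and> Y \<in> verts (line_digraph H) \<and> tl (vtx_word X) = butlast (vtx_word Y)"
      using tl_word by (auto simp: arcs_line_digraph verts_line_digraph)
  next
    assume A: "X \<in> verts (line_digraph H) \<and> Y \<in> verts (line_digraph H) \<and> tl (vtx_word X) = butlast (vtx_word Y)"
    then obtain x y y' z where "X = Arc x y" "(x, y) \<in> arcs H" "Y = Arc y' z" "(y', z) \<in> arcs H"
      by (auto simp: verts_line_digraph)
    moreover from this have "vtx_word y = vtx_word y'" using A tl_word by auto
    then have "y = y'" using calculation arc H
      by (metis bij_betw_imp_inj_on inj_on_eq_iff overlap_digraph_def)
    ultimately show "(X, Y) \<in> arcs (line_digraph H)" by (auto simp: arcs_line_digraph)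
  qed
  then show ?thesis
    using bij_betw_vtx_word_line_digraph[OF H nonempty] by (simp add: overlap_digraph_def)
qed

text \<open>The words of length n all of whose factors of length l are vertices of CK(d,l).\<close>

definition kautz_words :: "nat \<Rightarrow> nat \<Rightarrow> nat \<Rightarrow> nat list set" where
  "kautz_words d l n = {w. length w = n \<and> set w \<subseteq> {..d} \<and> successively (\<noteq>) w
     \<and> (\<forall>j. j + l \<le> n \<longrightarrow> w ! j \<noteq> w ! (j + l - 1))}"

lemma CK_vertex_iff_kautz_word: "CK_vertex d l a \<longleftrightarrow> a \<in> kautz_words d l l"
  by (auto simp: CK_vertex_def kautz_words_def successively_conv_nth set_conv_nth)

lemma overlap_digraph_CK: "overlap_digraph (CK d l) (kautz_words d l l)"
proof -
  have overlap: "(\<forall>i. i + 1 < l \<longrightarrow> b ! i = a ! (i + 1)) \<longleftrightarrow> tl a = butlast b"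
    if "length a = l" "length b = l" for a b :: "nat list"
    using that by (auto simp: list_eq_iff_nth_eq nth_tl nth_butlast)
  have "verts (CK d l) = Base ` kautz_words d l l"
    by (auto simp: CK_def verts_def CK_vertex_iff_kautz_word)
  moreover have "arcs (CK d l) =
      {(Base a, Base b) | a b. a \<in> kautz_words d l l \<and> b \<in> kautz_words d l l \<and> tl a = butlast b}"
    unfolding CK_def arcs_def CK_vertex_iff_kautz_word
    using overlap by (fastforce simp: kautz_words_def)
  ultimately show ?thesis
    unfolding overlap_digraph_def bij_betw_def
    by (auto simp: inj_on_def image_image)
qed

lemma kautz_words_Suc:
  assumes "2 \<le> l" "l \<le> n"
  shows "kautz_words d l (Suc n) = {w. w \<noteq> [] \<and> butlast w \<in> kautz_words d l n \<and> tl w \<in> kautz_words d l n}"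
proof (intro set_eqI iffI)
  fix w assume w: "w \<in> kautz_words d l (Suc n)"
  then have "w \<noteq> []" by (auto simp: kautz_words_def)
  then have "successively (\<noteq>) (butlast w @ [last w])" using w by (simp add: kautz_words_def)
  then have "butlast w \<in> kautz_words d l n"
    using w assms by (auto simp: kautz_words_def successively_append_iff nth_butlast dest: in_set_butlastD)
  moreover have "tl w ! j \<noteq> tl w ! (j + l - 1)" if "j + l \<le> n" for j
    using w that assms by (auto simp: kautz_words_def nth_tl dest: spec[of _ "Suc j"])
  then have "tl w \<in> kautz_words d l n"
    using w \<open>w \<noteq> []\<close> by (cases w) (auto simp: kautz_words_def successively_Cons)
  ultimately show "w \<in> {w. w \<noteq> [] \<and> butlast w \<in> kautz_words d l n \<and> tl w \<in> kautz_words d l n}"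
    using \<open>w \<noteq> []\<close> by simp
next
  fix w assume w_in: "w \<in> {w. w \<noteq> [] \<and> butlast w \<in> kautz_words d l n \<and> tl w \<in> kautz_words d l n}"
  then obtain a v where w: "w = a # v" by (cases w) auto
  have rear: "v \<in> kautz_words d l n" using w_in w by simp
  then have v: "length v = n" "2 \<le> n" using assms by (auto simp: kautz_words_def)
  then have "v \<noteq> []" by auto
  then have front: "a # butlast v \<in> kautz_words d l n" using w_in w by simp
  obtain b u where "v = b # u" "u \<noteq> []" using v by (cases v; cases "tl v") auto
  then have "butlast v \<noteq> []" "hd v = hd (butlast v)" by simp_all
  then have "a \<noteq> hd v" using front by (simp add: kautz_words_def successively_Cons)
  then have "successively (\<noteq>) w" using rear by (simp add: w kautz_words_def successively_Cons)
  moreover have "w ! j \<noteq> w ! (j + l - 1)" if "j + l \<le> Suc n" for j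
  proof (cases j)
    case 0
    have "a \<noteq> (a # butlast v) ! (l - 1)"
      using front assms by (auto simp: kautz_words_def dest: spec[of _ 0])
    moreover have "(a # butlast v) ! (l - 1) = w ! (l - 1)"
      using v assms by (simp add: w nth_Cons' nth_butlast)
    ultimately show ?thesis by (simp add: 0 w)
  next
    case (Suc i)
    have "w ! (j + l - 1) = v ! (i + l - 1)" using assms by (simp add: Suc w nth_Cons')
    then show ?thesis using rear that by (simp add: Suc w kautz_words_def)
  qed
  ultimately show "w \<in> kautz_words d l (Suc n)"
    using front rear v by (auto simp: w kautz_words_def)
qed

lemma overlap_digraph_iter_CK:
  assumes "2 \<le> l"
  shows "overlap_digraph (iter_line_digraph t (CK d l)) (kautz_words d l (l + t))"
proof (induction t)
  case 0
  then show ?case using overlap_digraph_CK by (simp add: iter_line_digraph_def)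
next
  case (Suc t)
  have "[] \<notin> kautz_words d l (l + t)" using assms by (auto simp: kautz_words_def)
  then have "overlap_digraph (line_digraph (iter_line_digraph t (CK d l))) (kautz_words d l (l + Suc t))"
    using overlap_digraph_line_digraph[OF Suc.IH] kautz_words_Suc[of l "l + t" d] assms by simp
  then show ?case by (simp add: iter_line_digraph_def)
qed

lemma card_verts_iter_CK:
  "2 \<le> l \<Longrightarrow> card (verts (iter_line_digraph t (CK d l))) = card (kautz_words d l (l + t))"
  using overlap_digraph_iter_CK by (metis bij_betw_same_card overlap_digraph_def)

text \<open>The inner vertices of the walks from a to b with n + 1 steps in the complete digraph on {0..d}.\<close>

definition walk_interiors :: "nat \<Rightarrow> nat \<Rightarrow> nat \<Rightarrow> nat \<Rightarrow> nat list set" where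
  "walk_interiors d a b n = {ms. length ms = n \<and> set ms \<subseteq> {..d} \<and> successively (\<noteq>) (a # ms @ [b])}"

lemma finite_walk_interiors: "finite (walk_interiors d a b n)"
  by (rule finite_subset[OF _ finite_lists_length_eq[OF finite_atMost, of d n]])
     (auto simp: walk_interiors_def)

lemma bij_betw_walk_interiors_Suc:
  "bij_betw (\<lambda>(c, ms). c # ms) (SIGMA c:{..d} - {a}. walk_interiors d c b n) (walk_interiors d a b (Suc n))"
proof -
  have "walk_interiors d a b (Suc n) \<subseteq> (\<lambda>(c, ms). c # ms) ` (SIGMA c:{..d} - {a}. walk_interiors d c b n)"
  proof
    fix w assume "w \<in> walk_interiors d a b (Suc n)"
    then obtain c ms where "w = c # ms" "(c, ms) \<in> (SIGMA c:{..d} - {a}. walk_interiors d c b n)"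
      by (cases w) (auto simp: walk_interiors_def)
    then show "w \<in> (\<lambda>(c, ms). c # ms) ` (SIGMA c:{..d} - {a}. walk_interiors d c b n)" by force
  qed
  then show ?thesis
    by (auto simp: bij_betw_def inj_on_def walk_interiors_def)
qed

lemma card_walk_interiors:
  assumes "a \<le> d" "b \<le> d"
  shows "(real d + 1) * card (walk_interiors d a b n) =
     real d ^ (n + 1) - (-1) ^ (n + 1) + (real d + 1) * (-1) ^ (n + 1) * of_bool (a = b)"
  using assms(1)
proof (induction n arbitrary: a)
  case 0
  have "walk_interiors d a b 0 = (if a = b then {} else {[]})" by (auto simp: walk_interiors_def)
  then show ?case by simp
next
  case (Suc n)
  have "card (walk_interiors d a b (Suc n)) = (\<Sum>c\<in>{..d} - {a}. card (walk_interiors d c b n))"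
    using card_filter_bij_Sigma[OF bij_betw_walk_interiors_Suc, where P = "\<lambda>_. True"] finite_walk_interiors
    by simp
  then have "(real d + 1) * card (walk_interiors d a b (Suc n))
      = (\<Sum>c\<in>{..d} - {a}. real d ^ (n + 1) - (-1) ^ (n + 1) + (real d + 1) * (-1) ^ (n + 1) * of_bool (c = b))"
    using Suc.IH by (simp add: sum_distrib_left)
  also have "\<dots> = real d * (real d ^ (n + 1) - (-1) ^ (n + 1))
      + (real d + 1) * (-1) ^ (n + 1) * of_bool (a \<noteq> b)"
    using Suc.prems assms(2)
    by (simp add: sum_subtractf sum_distrib_left[symmetric] of_bool_def sum.delta del: sum_of_bool_eq)
  also have "\<dots> = real d ^ (Suc n + 1) - (-1) ^ (Suc n + 1) + (real d + 1) * (-1) ^ (Suc n + 1) * of_bool (a = b)"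
    by (cases "a = b") (simp_all add: algebra_simps)
  finally show ?case .
qed

text \<open>For l = t + k + 1, a ladder (xs, ys) stands for the first and the last t + 1 letters of a word
  in kautz_words d l (l + t); its rungs xs ! j \<noteq> ys ! j are the constraints w(j) \<noteq> w(j+l-1).\<close>

definition ladders :: "nat \<Rightarrow> nat \<Rightarrow> (nat list \<times> nat list) set" where
  "ladders d t = {(xs, ys). length xs = Suc t \<and> length ys = Suc t \<and> set xs \<subseteq> {..d} \<and> set ys \<subseteq> {..d}
     \<and> successively (\<noteq>) xs \<and> successively (\<noteq>) ys \<and> list_all2 (\<noteq>) xs ys}"

definition next_rungs :: "nat \<Rightarrow> nat \<Rightarrow> nat \<Rightarrow> (nat \<times> nat) set" where
  "next_rungs d x y = {(a, b). a \<le> d \<and> b \<le> d \<and> a \<noteq> b \<and> a \<noteq> x \<and> b \<noteq> y}"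

lemma finite_ladders: "finite (ladders d t)"
proof -
  have "ladders d t \<subseteq> {xs. set xs \<subseteq> {..d} \<and> length xs = Suc t} \<times> {ys. set ys \<subseteq> {..d} \<and> length ys = Suc t}"
    by (auto simp: ladders_def)
  then show ?thesis
    by (rule finite_subset) (intro finite_cartesian_product finite_lists_length_eq finite_atMost)
qed

lemma finite_next_rungs: "finite (next_rungs d x y)"
  by (rule finite_subset[of _ "{..d} \<times> {..d}"]) (auto simp: next_rungs_def)

lemma ladder_ends:
  assumes "L \<in> ladders d t"
  shows "fst L \<noteq> []" "snd L \<noteq> []" "last (fst L) \<noteq> last (snd L)"
    "last (fst L) \<le> d" "last (snd L) \<le> d" "hd (snd L) \<le> d"
proof -
  have len: "length (fst L) = Suc t" "length (snd L) = Suc t"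
    and rails: "set (fst L) \<subseteq> {..d}" "set (snd L) \<subseteq> {..d}" and rungs: "list_all2 (\<noteq>) (fst L) (snd L)"
    using assms by (auto simp: ladders_def)
  then show ne: "fst L \<noteq> []" "snd L \<noteq> []" by auto
  then show "last (fst L) \<le> d" "last (snd L) \<le> d" "hd (snd L) \<le> d"
    using rails last_in_set hd_in_set by blast+
  show "last (fst L) \<noteq> last (snd L)"
    using list_all2_nthD[OF rungs, of t] len ne by (simp add: last_conv_nth)
qed

lemma bij_betw_ladders_Suc:
  "bij_betw (\<lambda>(L, e). (fst L @ [fst e], snd L @ [snd e]))
     (SIGMA L:ladders d t. next_rungs d (last (fst L)) (last (snd L))) (ladders d (Suc t))"
proof -
  have snoc: "(xs @ [a], ys @ [b]) \<in> ladders d (Suc t) \<longleftrightarrow>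
      (xs, ys) \<in> ladders d t \<and> (a, b) \<in> next_rungs d (last xs) (last ys)"
    if "length xs = Suc t" "length ys = Suc t" for xs ys a b
    using that by (auto simp: ladders_def next_rungs_def successively_append_iff list_all2_append)
  have "L \<in> (\<lambda>(L, e). (fst L @ [fst e], snd L @ [snd e])) `
      (SIGMA L:ladders d t. next_rungs d (last (fst L)) (last (snd L)))"
    if L_in: "L \<in> ladders d (Suc t)" for L
  proof -
    obtain xs ys where L: "L = (xs, ys)" and len: "length xs = Suc (Suc t)" "length ys = Suc (Suc t)"
      using L_in by (auto simp: ladders_def)
    then have "xs \<noteq> []" "ys \<noteq> []" by auto
    then have "L = (butlast xs @ [last xs], butlast ys @ [last ys])" by (simp add: L)
    moreover have "length (butlast xs) = Suc t" "length (butlast ys) = Suc t" using len by simp_all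
    ultimately show ?thesis using L_in snoc by force
  qed
  moreover have "(fst L @ [fst e], snd L @ [snd e]) \<in> ladders d (Suc t)"
    if "L \<in> ladders d t" "e \<in> next_rungs d (last (fst L)) (last (snd L))" for L e
    using that snoc[of "fst L" "snd L" "fst e" "snd e"] by (auto simp: ladders_def)
  ultimately show ?thesis
    by (auto simp: bij_betw_def inj_on_def)
qed

lemma card_next_rungs_fst:
  assumes "x \<noteq> y" "y \<le> d" "c \<le> d"
  shows "real (card {e \<in> next_rungs d x y. fst e = c}) = (real d - 1) * (1 - of_bool (x = c)) + of_bool (y = c)"
proof (cases "x = c")
  case True
  then have "{e \<in> next_rungs d x y. fst e = c} = {}" by (auto simp: next_rungs_def)
  then have "card {e \<in> next_rungs d x y. fst e = c} = 0" by (simp only: card.empty)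
  then show ?thesis using True assms by simp
next
  case False
  have "{e \<in> next_rungs d x y. fst e = c} = Pair c ` ({..d} - {c, y})"
    using False assms by (auto simp: next_rungs_def)
  then have "card {e \<in> next_rungs d x y. fst e = c} = card ({..d} - {c, y})"
    by (simp add: card_image inj_on_def)
  also have "\<dots> = Suc d - card {c, y}"
    using assms by (simp add: card_Diff_subset)
  finally show ?thesis
    using False assms by (cases "y = c") (simp_all add: of_nat_diff)
qed

lemma card_next_rungs_snd:
  assumes "x \<noteq> y" "x \<le> d" "c \<le> d"
  shows "real (card {e \<in> next_rungs d x y. snd e = c}) = (real d - 1) * (1 - of_bool (y = c)) + of_bool (x = c)"
proof -
  have "{e \<in> next_rungs d x y. snd e = c} = prod.swap ` {e \<in> next_rungs d y x. fst e = c}"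
    by (auto simp: next_rungs_def)
  then have "card {e \<in> next_rungs d x y. snd e = c} = card {e \<in> next_rungs d y x. fst e = c}"
    by (simp add: card_image)
  then show ?thesis using card_next_rungs_fst[of y x d c] assms by simp
qed

lemma card_next_rungs:
  assumes "x \<noteq> y" "x \<le> d" "y \<le> d"
  shows "real (card (next_rungs d x y)) = real d ^ 2 - real d + 1"
proof -
  have partition: "next_rungs d x y = (\<Union>c\<in>{..d}. {e \<in> next_rungs d x y. fst e = c})"
    by (auto simp: next_rungs_def)
  have "card (next_rungs d x y) = (\<Sum>c\<in>{..d}. card {e \<in> next_rungs d x y. fst e = c})"
    by (subst partition, rule card_UN_disjoint) (auto intro: finite_subset[OF _ finite_next_rungs])
  then have "real (card (next_rungs d x y))
      = (\<Sum>c\<in>{..d}. (real d - 1) * (1 - of_bool (x = c)) + of_bool (y = c))"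
    using assms card_next_rungs_fst by simp
  also have "\<dots> = (real d - 1) * (\<Sum>c\<in>{..d}. 1 - of_bool (x = c)) + (\<Sum>c\<in>{..d}. of_bool (y = c))"
    by (simp add: sum.distrib sum_distrib_left del: sum_of_bool_eq)
  also have "\<dots> = (real d - 1) * real d + 1"
    using assms by (simp add: sum_subtractf of_bool_def del: sum_of_bool_eq)
  finally show ?thesis by (simp add: algebra_simps power2_eq_square)
qed

definition ladder_count :: "nat \<Rightarrow> nat \<Rightarrow> (nat list \<times> nat list \<Rightarrow> bool) \<Rightarrow> real" where
  "ladder_count d t P = real (card {L \<in> ladders d t. P L})"

lemma ladder_count_eq_sum: "ladder_count d t P = (\<Sum>L\<in>ladders d t. of_bool (P L))"
  using finite_ladders by (simp add: ladder_count_def Int_def)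

lemma ladder_count_Suc:
  "ladder_count d (Suc t) P = (\<Sum>L\<in>ladders d t.
     real (card {e \<in> next_rungs d (last (fst L)) (last (snd L)). P (fst L @ [fst e], snd L @ [snd e])}))"
  using card_filter_bij_Sigma[OF bij_betw_ladders_Suc finite_ladders] finite_next_rungs
  by (simp add: ladder_count_def)

lemma ladder_count_all_Suc:
  "ladder_count d (Suc t) (\<lambda>_. True) = (real d ^ 2 - real d + 1) * ladder_count d t (\<lambda>_. True)"
proof -
  have "ladder_count d (Suc t) (\<lambda>_. True) = (\<Sum>L\<in>ladders d t. real d ^ 2 - real d + 1)"
    unfolding ladder_count_Suc
    by (rule sum.cong) (simp_all add: card_next_rungs ladder_ends)
  then show ?thesis by (simp add: ladder_count_def)
qed

lemma ladder_count_top_bottom_Suc: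
  "ladder_count d (Suc t) (\<lambda>L. last (fst L) = hd (snd L)) =
     (real d - 1) * (ladder_count d t (\<lambda>_. True) - ladder_count d t (\<lambda>L. last (fst L) = hd (snd L)))
     + ladder_count d t (\<lambda>L. last (snd L) = hd (snd L))"
proof -
  have "ladder_count d (Suc t) (\<lambda>L. last (fst L) = hd (snd L)) = (\<Sum>L\<in>ladders d t.
      (real d - 1) * (1 - of_bool (last (fst L) = hd (snd L))) + of_bool (last (snd L) = hd (snd L)))"
    unfolding ladder_count_Suc
    by (rule sum.cong[OF refl]) (simp add: ladder_ends card_next_rungs_fst)
  then show ?thesis
    by (simp add: ladder_count_eq_sum sum.distrib sum_subtractf sum_distrib_left[symmetric] del: sum_of_bool_eq)
qed

lemma ladder_count_bottom_bottom_Suc: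
  "ladder_count d (Suc t) (\<lambda>L. last (snd L) = hd (snd L)) =
     (real d - 1) * (ladder_count d t (\<lambda>_. True) - ladder_count d t (\<lambda>L. last (snd L) = hd (snd L)))
     + ladder_count d t (\<lambda>L. last (fst L) = hd (snd L))"
proof -
  have "ladder_count d (Suc t) (\<lambda>L. last (snd L) = hd (snd L)) = (\<Sum>L\<in>ladders d t.
      (real d - 1) * (1 - of_bool (last (snd L) = hd (snd L))) + of_bool (last (fst L) = hd (snd L)))"
    unfolding ladder_count_Suc
    by (rule sum.cong[OF refl]) (simp add: ladder_ends card_next_rungs_snd)
  then show ?thesis
    by (simp add: ladder_count_eq_sum sum.distrib sum_subtractf sum_distrib_left[symmetric] del: sum_of_bool_eq)
qed

lemma ladders_0: "ladders d 0 = (\<lambda>(a, b). ([a], [b])) ` {(a, b). a \<le> d \<and> b \<le> d \<and> a \<noteq> b}"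
proof -
  have "L \<in> (\<lambda>(a, b). ([a], [b])) ` {(a, b). a \<le> d \<and> b \<le> d \<and> a \<noteq> b}" if "L \<in> ladders d 0" for L
    using that by (auto simp: ladders_def length_Suc_conv)
  then show ?thesis by (auto simp: ladders_def)
qed

lemma ladder_count_0:
  "ladder_count d 0 (\<lambda>_. True) = (real d + 1) * real d"
  "ladder_count d 0 (\<lambda>L. last (fst L) = hd (snd L)) = 0"
  "ladder_count d 0 (\<lambda>L. last (snd L) = hd (snd L)) = (real d + 1) * real d"
proof -
  have "card {(a, b). a \<le> d \<and> b \<le> d \<and> a \<noteq> b} = card ({..d} \<times> {..d} - (\<lambda>a. (a, a)) ` {..d})"
    by (rule arg_cong[of _ _ card]) auto
  also have "\<dots> = (d + 1) * (d + 1) - (d + 1)"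
    by (subst card_Diff_subset) (auto simp: card_image inj_on_def card_cartesian_product)
  finally have "card (ladders d 0) = (d + 1) * (d + 1) - (d + 1)"
    unfolding ladders_0 by (subst card_image) (auto simp: inj_on_def)
  then show all: "ladder_count d 0 (\<lambda>_. True) = (real d + 1) * real d"
    by (simp add: ladder_count_def of_nat_diff algebra_simps)
  have "{L \<in> ladders d 0. last (snd L) = hd (snd L)} = {L \<in> ladders d 0. True}"
    by (auto simp: ladders_0)
  then show "ladder_count d 0 (\<lambda>L. last (snd L) = hd (snd L)) = (real d + 1) * real d"
    using all by (simp only: ladder_count_def)
  have "{L \<in> ladders d 0. last (fst L) = hd (snd L)} = {}"
    by (auto simp: ladders_0)
  then show "ladder_count d 0 (\<lambda>L. last (fst L) = hd (snd L)) = 0"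
    by (simp only: ladder_count_def card.empty of_nat_0)
qed

lemma ladder_count_all:
  "ladder_count d t (\<lambda>_. True) = (real d + 1) * real d * (real d ^ 2 - real d + 1) ^ t"
  by (induction t) (simp_all add: ladder_count_0 ladder_count_all_Suc)

lemma ladder_count_top_bottom:
  "ladder_count d t (\<lambda>L. last (fst L) = hd (snd L)) = real d * (real d ^ 2 - real d + 1) ^ t
     + 1/2 * (-1) ^ t * (real d - 2) ^ t * (real d - 1) * real d
     - 1/2 * (-1) ^ t * real d ^ (t + 1) * (real d + 1)"
proof -
  \<comment> \<open>The recurrences multiply the difference of the two refined counts by -d.\<close>
  have "ladder_count d t (\<lambda>L. last (fst L) = hd (snd L)) = real d * (real d ^ 2 - real d + 1) ^ t
      + 1/2 * (-1) ^ t * (real d - 2) ^ t * (real d - 1) * real d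
      - 1/2 * (-1) ^ t * real d ^ (t + 1) * (real d + 1)
    \<and> ladder_count d t (\<lambda>L. last (snd L) = hd (snd L)) =
      ladder_count d t (\<lambda>L. last (fst L) = hd (snd L)) + (real d + 1) * real d * (-1) ^ t * real d ^ t"
  proof (induction t)
    case 0
    then show ?case by (simp add: ladder_count_0 field_simps)
  next
    case (Suc t)
    then have top: "ladder_count d t (\<lambda>L. last (fst L) = hd (snd L)) = real d * (real d ^ 2 - real d + 1) ^ t
        + 1/2 * (-1) ^ t * (real d - 2) ^ t * (real d - 1) * real d
        - 1/2 * (-1) ^ t * real d ^ (t + 1) * (real d + 1)"
      and bottom: "ladder_count d t (\<lambda>L. last (snd L) = hd (snd L)) =
        ladder_count d t (\<lambda>L. last (fst L) = hd (snd L)) + (real d + 1) * real d * (-1) ^ t * real d ^ t"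
      by blast+
    show ?case
      unfolding ladder_count_top_bottom_Suc ladder_count_bottom_bottom_Suc ladder_count_all bottom top
      by (simp add: field_simps power2_eq_square)
  qed
  then show ?thesis ..
qed

lemma kautz_word_split_iff:
  assumes l: "l = t + k + 1" and k: "1 \<le> k"
    and len: "length xs = Suc t" "length ms = k - 1" "length ys = Suc t"
  shows "xs @ ms @ ys \<in> kautz_words d l (l + t) \<longleftrightarrow>
     (xs, ys) \<in> ladders d t \<and> ms \<in> walk_interiors d (last xs) (hd ys) (k - 1)"
proof -
  have chords: "(\<forall>j. j + l \<le> l + t \<longrightarrow> (xs @ ms @ ys) ! j \<noteq> (xs @ ms @ ys) ! (j + l - 1))
      \<longleftrightarrow> list_all2 (\<noteq>) xs ys"
  proof -
    have "(xs @ ms @ ys) ! j = xs ! j" if "j \<le> t" for j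
      using that len by (simp add: nth_append)
    moreover have "(xs @ ms @ ys) ! (j + l - 1) = ys ! j" for j
    proof -
      have "j + l - 1 = length (xs @ ms) + j" using len l k by simp
      then show ?thesis by (simp only: append_assoc[symmetric] nth_append_length_plus)
    qed
    ultimately show ?thesis
      using len by (auto simp: list_all2_conv_all_nth less_Suc_eq_le)
  qed
  have "xs \<noteq> []" "ys \<noteq> []" using len by auto
  then have "successively (\<noteq>) (xs @ ms @ ys) \<longleftrightarrow>
      successively (\<noteq>) xs \<and> successively (\<noteq>) ys \<and> successively (\<noteq>) (last xs # ms @ [hd ys])"
    by (cases ms) (auto simp: successively_append_iff successively_Cons hd_append)
  then show ?thesis
    using chords len l k by (auto simp: kautz_words_def ladders_def walk_interiors_def)
qed

lemma bij_betw_ladders_walks_kautz_words: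
  assumes l: "l = t + k + 1" and k: "1 \<le> k"
  shows "bij_betw (\<lambda>(L, ms). fst L @ ms @ snd L)
     (SIGMA L:ladders d t. walk_interiors d (last (fst L)) (hd (snd L)) (k - 1)) (kautz_words d l (l + t))"
proof -
  have lengths: "length xs = Suc t" "length ys = Suc t" if "(xs, ys) \<in> ladders d t" for xs ys
    using that by (auto simp: ladders_def)
  have "w \<in> (\<lambda>(L, ms). fst L @ ms @ snd L) `
      (SIGMA L:ladders d t. walk_interiors d (last (fst L)) (hd (snd L)) (k - 1))"
    if w: "w \<in> kautz_words d l (l + t)" for w
  proof -
    have "length w = Suc t + (k - 1) + Suc t" using w l k by (simp add: kautz_words_def)
    then obtain xs ms ys where "w = xs @ ms @ ys"
      and "length xs = Suc t" "length ms = k - 1" "length ys = Suc t"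
      by (intro that[of "take (Suc t) w" "take (k - 1) (drop (Suc t) w)" "drop (k - 1) (drop (Suc t) w)"])
        (simp_all del: drop_drop)
    then show ?thesis using w kautz_word_split_iff[OF l k] by force
  qed
  moreover have "inj_on (\<lambda>(L, ms). fst L @ ms @ snd L)
      (SIGMA L:ladders d t. walk_interiors d (last (fst L)) (hd (snd L)) (k - 1))"
    using lengths by (auto simp: inj_on_def walk_interiors_def)
  moreover have "fst L @ ms @ snd L \<in> kautz_words d l (l + t)"
    if "L \<in> ladders d t" "ms \<in> walk_interiors d (last (fst L)) (hd (snd L)) (k - 1)" for L ms
  proof -
    have "length ms = k - 1" using that(2) by (simp add: walk_interiors_def)
    then show ?thesis
      using that kautz_word_split_iff[OF l k, of "fst L" ms "snd L" d] lengths[of "fst L" "snd L"] by simp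
  qed
  ultimately show ?thesis
    by (auto simp: bij_betw_def)
qed

lemma card_kautz_words:
  assumes l: "l = t + k + 1" and k: "1 \<le> k"
  shows "(real d + 1) * card (kautz_words d l (l + t)) =
     (real d ^ k - (-1) ^ k) * ladder_count d t (\<lambda>_. True)
     + (real d + 1) * (-1) ^ k * ladder_count d t (\<lambda>L. last (fst L) = hd (snd L))"
proof -
  have "card (kautz_words d l (l + t)) =
      (\<Sum>L\<in>ladders d t. card (walk_interiors d (last (fst L)) (hd (snd L)) (k - 1)))"
    using card_filter_bij_Sigma[OF bij_betw_ladders_walks_kautz_words[OF l k] finite_ladders,
        where P = "\<lambda>_. True"] finite_walk_interiors by simp
  then have "(real d + 1) * card (kautz_words d l (l + t)) = (\<Sum>L\<in>ladders d t.
      real d ^ k - (-1) ^ k + (real d + 1) * (-1) ^ k * of_bool (last (fst L) = hd (snd L)))"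
    using k by (simp add: sum_distrib_left card_walk_interiors ladder_ends)
  then show ?thesis
    by (simp add: ladder_count_eq_sum sum.distrib sum_distrib_left del: sum_of_bool_eq)
qed

theorem theorem4:
  fixes d l t :: nat
  assumes "l \<ge> 3" and "d \<ge> 1" and "1 \<le> t" and "t \<le> l - 2"
  shows "real (card (verts (iter_line_digraph t (CK d l)))) =
           (real d ^ 2 - real d + 1) ^ t * real d ^ (l - t)
           + 1/2 * (-1) ^ (l + 1) * (real d - 2) ^ t * (real d - 1) * real d
           + 1/2 * (-1) ^ l * real d ^ (t + 1) * (real d + 1)"
proof -
  define k where "k = l - t - 1"
  have l: "l = t + k + 1" and k: "1 \<le> k" and "l - t = k + 1"
    using assms unfolding k_def by auto
  have "(real d + 1) * card (verts (iter_line_digraph t (CK d l))) =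
     (real d ^ k - (-1) ^ k) * ladder_count d t (\<lambda>_. True)
     + (real d + 1) * (-1) ^ k * ladder_count d t (\<lambda>L. last (fst L) = hd (snd L))"
    using card_verts_iter_CK card_kautz_words[OF l k] assms by simp
  also have "\<dots> = (real d + 1) * ((real d ^ 2 - real d + 1) ^ t * real d ^ (l - t)
           + 1/2 * (-1) ^ (l + 1) * (real d - 2) ^ t * (real d - 1) * real d
           + 1/2 * (-1) ^ l * real d ^ (t + 1) * (real d + 1))"
    unfolding ladder_count_all ladder_count_top_bottom \<open>l - t = k + 1\<close> l
    by (simp add: power_add field_simps)
  finally show ?thesis by simp
qed

end
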